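(* Let $\mathscr H=(V,E)$ be a connected hypergraph, and let $\{a_1,\dots,a_m\}$ and $\{x_1,\dots,x_m\}$ be disjoint sets of hyperedges. Let $\mathbf f$ be a hypertree such that $x_j$ can transfer valence to $a_j$ for all $j$, but $x_j$ cannot transfer valence to $a_i$ for any $i<j$. Then for every subset $J\subset\{1,\dots,m\}$, the vector $\mathbf f+\sum_{j\in J}(\mathbf i_{\{a_j\}}-\mathbf i_{\{x_j\}})$ is a hypertree.
   Context: A hypergraph $(V,E)$ has vertex set $V$ and a finite multiset $E$ of non-empty subsets of $V$ (hyperedges); its bipartite graph has color classes $V$ and $E$ with $v$ joined to $e$ iff $v\in e$, and the hypergraph is connected if this graph is. A hypertree is a function $\mathbf f\colon E\to\mathbf N$ such that some spanning tree of this bipartite graph has degree $\mathbf f(e)+1$ at each $e\in E$. $\mathbf i_{\{e\}}$ is the indicator vector of $e$. Hyperedge $x$ can transfer valence to $y$ at $\mathbf f$ if $\mathbf f-\mathbf i_{\{x\}}+\mathbf i_{\{y\}}$ is a hypertree. *)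

theory Defs
  imports Main
begin

(* Indexing hyperedges by E models the fact
   that E is a multiset: distinct indices may carry the same vertex set. *)
definition hypergraph :: "'v set \<Rightarrow> 'e set \<Rightarrow> ('e \<Rightarrow> 'v set) \<Rightarrow> bool" where
  "hypergraph V E inc \<longleftrightarrow> finite V \<and> finite E \<and>
     (\<forall>e\<in>E. inc e \<noteq> {} \<and> inc e \<subseteq> V)"

definition bip_edges :: "'v set \<Rightarrow> 'e set \<Rightarrow> ('e \<Rightarrow> 'v set) \<Rightarrow> ('v \<times> 'e) set" where
  "bip_edges V E inc = {(v, e). v \<in> V \<and> e \<in> E \<and> v \<in> inc e}"

definition bip_nodes :: "'v set \<Rightarrow> 'e set \<Rightarrow> ('v + 'e) set" where
  "bip_nodes V E = Inl ` V \<union> Inr ` E"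

definition bip_adj :: "('v \<times> 'e) set \<Rightarrow> (('v + 'e) \<times> ('v + 'e)) set" where
  "bip_adj T = {(Inl v, Inr e) | v e. (v, e) \<in> T} \<union> {(Inr e, Inl v) | v e. (v, e) \<in> T}"

definition graph_connected :: "('v + 'e) set \<Rightarrow> ('v \<times> 'e) set \<Rightarrow> bool" where
  "graph_connected N T \<longleftrightarrow> (\<forall>u\<in>N. \<forall>w\<in>N. (u, w) \<in> (bip_adj T)\<^sup>*)"

definition hyp_connected :: "'v set \<Rightarrow> 'e set \<Rightarrow> ('e \<Rightarrow> 'v set) \<Rightarrow> bool" where
  "hyp_connected V E inc \<longleftrightarrow> graph_connected (bip_nodes V E) (bip_edges V E inc)"

definition spanning_tree :: "'v set \<Rightarrow> 'e set \<Rightarrow> ('e \<Rightarrow> 'v set) \<Rightarrow> ('v \<times> 'e) set \<Rightarrow> bool" where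
  "spanning_tree V E inc T \<longleftrightarrow> T \<subseteq> bip_edges V E inc \<and>
     graph_connected (bip_nodes V E) T \<and>
     (\<forall>t\<in>T. \<not> graph_connected (bip_nodes V E) (T - {t}))"

(* f is a hypertree: some spanning tree has degree f(e)+1 at each e \<in> E.
   (f is integer valued; the condition forces f e \<ge> 0 on E.) *)
definition hypertree :: "'v set \<Rightarrow> 'e set \<Rightarrow> ('e \<Rightarrow> 'v set) \<Rightarrow> ('e \<Rightarrow> int) \<Rightarrow> bool" where
  "hypertree V E inc f \<longleftrightarrow> (\<exists>T. spanning_tree V E inc T \<and>
     (\<forall>e\<in>E. int (card {v. (v, e) \<in> T}) = f e + 1))"

definition ind :: "'e \<Rightarrow> 'e \<Rightarrow> int" where
  "ind e = (\<lambda>y. if y = e then 1 else 0)"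

definition can_transfer :: "'v set \<Rightarrow> 'e set \<Rightarrow> ('e \<Rightarrow> 'v set) \<Rightarrow> ('e \<Rightarrow> int) \<Rightarrow> 'e \<Rightarrow> 'e \<Rightarrow> bool" where
  "can_transfer V E inc f x y \<longleftrightarrow> hypertree V E inc (\<lambda>e. f e - ind x e + ind y e)"

end

theory Submission
  imports Defs
begin

text \<open>Spanning trees of the bipartite graph form the bases of a matroid, so the degree
  vectors of spanning trees, and hence the hypertrees, satisfy the exchange axiom: if
  \<open>f x > g x\<close> then \<open>f - i_x + i_y\<close> is a hypertree for some \<open>y\<close> with \<open>f y < g y\<close>.  The lemma
  follows from this axiom alone, by induction on \<open>|J|\<close>.  Let \<open>k\<close> be the largest index in \<open>J\<close>
  and \<open>l \<noteq> k\<close> another one.  Exchanging at \<open>x_k\<close> between the hypertrees for \<open>J - {k}\<close> and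
  \<open>J - {l}\<close> moves the valence either to \<open>a_k\<close>, giving the hypertree for \<open>J\<close>, or to \<open>x_l\<close>.
  In the latter case a second exchange at \<open>x_k\<close>, now against \<open>f\<close>, would let \<open>x_k\<close> transfer
  valence to some \<open>a_i\<close> with \<open>i < k\<close>, which is excluded.\<close>

abbreviation bip_conn :: "('v \<times> 'e) set \<Rightarrow> ('v + 'e) \<Rightarrow> ('v + 'e) \<Rightarrow> bool" where
  "bip_conn T u w \<equiv> (u, w) \<in> (bip_adj T)\<^sup>*"

lemma bip_adj_mono: "T \<subseteq> T' \<Longrightarrow> bip_adj T \<subseteq> bip_adj T'"
  unfolding bip_adj_def by blast

lemma bip_conn_mono: "T \<subseteq> T' \<Longrightarrow> bip_conn T u w \<Longrightarrow> bip_conn T' u w"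
  using rtrancl_mono[OF bip_adj_mono] by blast

lemma sym_bip_adj: "sym (bip_adj T)"
  unfolding bip_adj_def sym_def by blast

lemma bip_conn_sym: "bip_conn T u w \<Longrightarrow> bip_conn T w u"
  using sym_rtrancl[OF sym_bip_adj] by (rule symD)

lemma bip_conn_edge:
  assumes "(v, e) \<in> T"
  shows "bip_conn T (Inl v) (Inr e)" and "bip_conn T (Inr e) (Inl v)"
  using assms unfolding bip_adj_def by blast+

lemma bip_conn_insert:
  assumes "bip_conn (insert (v, e) T) u w"
  shows "bip_conn T u w \<or> (bip_conn T u (Inl v) \<and> bip_conn T (Inr e) w)
           \<or> (bip_conn T u (Inr e) \<and> bip_conn T (Inl v) w)"
  using assms
proof (induction rule: rtrancl_induct)
  case (step y z)
  have "(y, z) \<in> bip_adj T \<or> (y, z) = (Inl v, Inr e) \<or> (y, z) = (Inr e, Inl v)"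
    using step.hyps(2) unfolding bip_adj_def by blast
  then show ?case
    using step.IH by (auto intro: rtrancl_into_rtrancl)
qed simp

lemma bip_conn_insert_redundant:
  assumes "bip_conn T (Inl v) (Inr e)" and "bip_conn (insert (v, e) T) u w"
  shows "bip_conn T u w"
proof -
  have "bip_adj (insert (v, e) T) \<subseteq> (bip_adj T)\<^sup>*"
    using assms(1) bip_conn_sym[OF assms(1)] unfolding bip_adj_def by blast
  then show ?thesis
    using assms(2) rtrancl_subset_rtrancl by blast
qed

lemma bip_conn_insert_swap:
  assumes "bip_conn (insert (v, e) T) (Inl a) (Inr b)" and "\<not> bip_conn T (Inl a) (Inr b)"
  shows "bip_conn (insert (a, b) T) (Inl v) (Inr e)"
proof -
  let ?T' = "insert (a, b) T"
  have T: "bip_conn T u w \<Longrightarrow> bip_conn ?T' u w" for u w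
    by (rule bip_conn_mono[of T]) auto
  have ab: "bip_conn ?T' (Inl a) (Inr b)" "bip_conn ?T' (Inr b) (Inl a)"
    by (simp_all add: bip_conn_edge)
  from bip_conn_insert[OF assms(1)] assms(2) consider
      "bip_conn T (Inl a) (Inl v)" "bip_conn T (Inr e) (Inr b)"
    | "bip_conn T (Inl a) (Inr e)" "bip_conn T (Inl v) (Inr b)"
    by blast
  then show ?thesis
  proof cases
    case 1
    then show ?thesis
      using ab T bip_conn_sym by (meson rtrancl_trans)
  next
    case 2
    then show ?thesis
      using ab T by (meson rtrancl_trans)
  qed
qed

lemma bip_cut_edge:
  assumes "bip_conn T u w" and "P u" and "\<not> P w"
  shows "\<exists>a b. (a, b) \<in> T \<and> P (Inl a) \<noteq> P (Inr b)"
  using assms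
proof (induction rule: rtrancl_induct)
  case (step y z)
  then show ?case
    unfolding bip_adj_def by (cases "P y") auto
qed simp

definition bip_forest :: "('v \<times> 'e) set \<Rightarrow> bool" where
  "bip_forest T \<longleftrightarrow> (\<forall>(v, e) \<in> T. \<not> bip_conn (T - {(v, e)}) (Inl v) (Inr e))"

lemma bip_forest_subset:
  assumes "bip_forest T" and "T' \<subseteq> T"
  shows "bip_forest T'"
  unfolding bip_forest_def
proof clarify
  fix v e
  assume "(v, e) \<in> T'" and "bip_conn (T' - {(v, e)}) (Inl v) (Inr e)"
  moreover have "T' - {(v, e)} \<subseteq> T - {(v, e)}"
    using assms(2) by blast
  ultimately have "(v, e) \<in> T" "bip_conn (T - {(v, e)}) (Inl v) (Inr e)"
    using assms(2) bip_conn_mono by blast+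
  then show False
    using assms(1) unfolding bip_forest_def by blast
qed

lemma bip_forest_insert:
  assumes forest: "bip_forest T" and ab: "\<not> bip_conn T (Inl a) (Inr b)"
  shows "bip_forest (insert (a, b) T)"
  unfolding bip_forest_def
proof clarify
  fix c d
  assume cd: "(c, d) \<in> insert (a, b) T"
    and conn: "bip_conn (insert (a, b) T - {(c, d)}) (Inl c) (Inr d)"
  have abT: "(a, b) \<notin> T"
    using ab bip_conn_edge(1) by metis
  show False
  proof (cases "(c, d) = (a, b)")
    case True
    then show False
      using conn ab abT by simp
  next
    case False
    then have cdT: "(c, d) \<in> T"
      using cd by blast
    have "insert (a, b) T - {(c, d)} = insert (a, b) (T - {(c, d)})"
      using False by blast
    then have "bip_conn (insert (a, b) (T - {(c, d)})) (Inl c) (Inr d)"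
      using conn by simp
    moreover have "T - {(c, d)} \<subseteq> T"
      by blast
    ultimately consider
        "bip_conn (T - {(c, d)}) (Inl c) (Inr d)"
      | "bip_conn T (Inl c) (Inl a)" "bip_conn T (Inr b) (Inr d)"
      | "bip_conn T (Inl c) (Inr b)" "bip_conn T (Inl a) (Inr d)"
      using bip_conn_insert bip_conn_mono by metis
    then show False
    proof cases
      case 1
      then show False
        using forest cdT unfolding bip_forest_def by blast
    next
      case 2
      then show False
        using ab bip_conn_edge(1)[OF cdT] bip_conn_sym rtrancl_trans by metis
    next
      case 3
      then show False
        using ab bip_conn_edge(2)[OF cdT] rtrancl_trans by metis
    qed
  qed
qed

lemma spanning_tree_iff:
  "spanning_tree V E inc T \<longleftrightarrow>
     T \<subseteq> bip_edges V E inc \<and> graph_connected (bip_nodes V E) T \<and> bip_forest T"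
proof -
  let ?conn = "graph_connected (bip_nodes V E)"
  have "\<not> ?conn (T - {(v, e)}) \<longleftrightarrow> \<not> bip_conn (T - {(v, e)}) (Inl v) (Inr e)"
    if sub: "T \<subseteq> bip_edges V E inc" and conn: "?conn T" and ve: "(v, e) \<in> T" for v e
  proof
    assume "\<not> ?conn (T - {(v, e)})"
    moreover have "T = insert (v, e) (T - {(v, e)})"
      using ve by blast
    ultimately show "\<not> bip_conn (T - {(v, e)}) (Inl v) (Inr e)"
      using conn bip_conn_insert_redundant[where T = "T - {(v, e)}"]
      unfolding graph_connected_def by metis
  next
    have "Inl v \<in> bip_nodes V E" "Inr e \<in> bip_nodes V E"
      using sub ve unfolding bip_edges_def bip_nodes_def by blast+
    then show "\<not> bip_conn (T - {(v, e)}) (Inl v) (Inr e) \<Longrightarrow> \<not> ?conn (T - {(v, e)})"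
      unfolding graph_connected_def by blast
  qed
  then show ?thesis
    unfolding spanning_tree_def bip_forest_def by (auto simp: Ball_def)
qed

lemma spanning_tree_conn:
  assumes "spanning_tree V E inc T" and "(a, b) \<in> bip_edges V E inc"
  shows "bip_conn T (Inl a) (Inr b)"
  using assms unfolding spanning_tree_def graph_connected_def bip_edges_def bip_nodes_def
  by blast

lemma spanning_tree_swap:
  assumes T: "spanning_tree V E inc T" and ve: "(v, e) \<in> T"
    and ab: "(a, b) \<in> bip_edges V E inc" "\<not> bip_conn (T - {(v, e)}) (Inl a) (Inr b)"
  shows "spanning_tree V E inc (insert (a, b) (T - {(v, e)}))"
proof -
  define T0 where "T0 = T - {(v, e)}"
  have T0: "T = insert (v, e) T0"
    using ve unfolding T0_def by blast
  have sub: "T \<subseteq> bip_edges V E inc" and forest: "bip_forest T"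
    and conn: "graph_connected (bip_nodes V E) T"
    using T by (simp_all add: spanning_tree_iff)
  have "bip_conn (insert (v, e) T0) (Inl a) (Inr b)"
    using spanning_tree_conn[OF T ab(1)] T0 by simp
  then have ve': "bip_conn (insert (a, b) T0) (Inl v) (Inr e)"
    using ab(2) unfolding T0_def by (rule bip_conn_insert_swap)
  have "bip_conn (insert (a, b) T0) u w" if "bip_conn T u w" for u w
  proof (rule bip_conn_insert_redundant[OF ve'])
    have "T \<subseteq> insert (v, e) (insert (a, b) T0)"
      using T0 by blast
    then show "bip_conn (insert (v, e) (insert (a, b) T0)) u w"
      using that by (rule bip_conn_mono)
  qed
  then have "graph_connected (bip_nodes V E) (insert (a, b) T0)"
    using conn unfolding graph_connected_def by blast
  moreover have "bip_forest (insert (a, b) T0)"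
    using bip_forest_insert[OF bip_forest_subset[OF forest] ab(2)] unfolding T0_def by blast
  moreover have "insert (a, b) T0 \<subseteq> bip_edges V E inc"
    using sub ab(1) T0 by blast
  ultimately show ?thesis
    unfolding T0_def by (simp add: spanning_tree_iff)
qed

lemma spanning_tree_exchange:
  assumes T: "spanning_tree V E inc T" and T': "spanning_tree V E inc T'"
    and p: "(v, e) \<in> T" "(v, e) \<notin> T'"
  shows "\<exists>q \<in> T' - T. spanning_tree V E inc (insert q (T - {(v, e)}))"
proof -
  define T0 where "T0 = T - {(v, e)}"
  have "bip_forest T" and sub: "T' \<subseteq> bip_edges V E inc"
    using T T' by (simp_all add: spanning_tree_iff)
  then have cut: "\<not> bip_conn T0 (Inl v) (Inr e)"
    using p(1) unfolding bip_forest_def T0_def by blast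
  have "bip_conn T' (Inl v) (Inr e)"
    using spanning_tree_conn[OF T'] T p(1) unfolding spanning_tree_def by blast
  from bip_cut_edge[OF this, where P = "bip_conn T0 (Inl v)"] cut
  obtain a b where q: "(a, b) \<in> T'"
    and side: "bip_conn T0 (Inl v) (Inl a) \<noteq> bip_conn T0 (Inl v) (Inr b)"
    by auto
  have ab: "\<not> bip_conn T0 (Inl a) (Inr b)"
  proof
    assume "bip_conn T0 (Inl a) (Inr b)"
    then have "bip_conn T0 (Inl v) (Inl a) \<longleftrightarrow> bip_conn T0 (Inl v) (Inr b)"
      using bip_conn_sym rtrancl_trans by metis
    then show False
      using side by blast
  qed
  have "(a, b) \<notin> T"
  proof
    assume "(a, b) \<in> T"
    then have "(a, b) \<in> T0"
      using q p(2) unfolding T0_def by blast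
    then show False
      using ab bip_conn_edge(1) by metis
  qed
  then show ?thesis
    using q spanning_tree_swap[OF T p(1)] sub ab unfolding T0_def by blast
qed

definition bip_degree :: "('v \<times> 'e) set \<Rightarrow> 'e \<Rightarrow> nat" where
  "bip_degree T e = card {v. (v, e) \<in> T}"

lemma finite_bip_neighbours: "finite T \<Longrightarrow> finite {v. (v, e) \<in> T}"
  by (rule finite_subset[of _ "fst ` T"]) force+

lemma bip_degree_insert:
  assumes "finite T" and "(a, y) \<notin> T"
  shows "int (bip_degree (insert (a, y) T) e) = int (bip_degree T e) + ind y e"
proof -
  have "{v. (v, e) \<in> insert (a, y) T} = (if e = y then insert a {v. (v, e) \<in> T} else {v. (v, e) \<in> T})"
    by auto
  then show ?thesis
    using assms finite_bip_neighbours[OF assms(1)] unfolding bip_degree_def ind_def by auto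
qed

lemma bip_degree_remove:
  assumes "finite T" and "(v, x) \<in> T"
  shows "int (bip_degree (T - {(v, x)}) e) = int (bip_degree T e) - ind x e"
proof (cases "e = x")
  case True
  let ?S = "{w. (w, e) \<in> T}"
  have "{w. (w, e) \<in> T - {(v, x)}} = ?S - {v}"
    using True by auto
  moreover have "v \<in> ?S" and "finite ?S"
    using True assms by (simp_all add: finite_bip_neighbours)
  moreover from this have "card ?S > 0"
    by (auto simp: card_gt_0_iff)
  ultimately show ?thesis
    using True by (simp add: bip_degree_def ind_def of_nat_diff)
next
  case False
  then have "{w. (w, e) \<in> T - {(v, x)}} = {w. (w, e) \<in> T}"
    by auto
  then show ?thesis
    using False by (simp add: bip_degree_def ind_def)
qed

lemma spanning_tree_finite:
  assumes "finite V" and "finite E" and "spanning_tree V E inc T"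
  shows "finite T"
proof (rule finite_subset)
  show "T \<subseteq> V \<times> E"
    using assms(3) unfolding spanning_tree_def bip_edges_def by blast
qed (use assms in simp)

lemma spanning_tree_degree_step:
  assumes fin: "finite V" "finite E"
    and T: "spanning_tree V E inc T" and T': "spanning_tree V E inc T'"
    and x: "bip_degree T' x < bip_degree T x"
  obtains y T1 where "y \<in> E" "spanning_tree V E inc T1" "card (T1 - T') < card (T - T')"
    "\<And>e. int (bip_degree T1 e) = int (bip_degree T e) - ind x e + ind y e"
proof -
  have finT: "finite T"
    using spanning_tree_finite[OF fin T] .
  have "\<not> {w. (w, x) \<in> T} \<subseteq> {w. (w, x) \<in> T'}"
    using x card_mono[OF finite_bip_neighbours[OF spanning_tree_finite[OF fin T']]]
    unfolding bip_degree_def by (meson leD)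
  then obtain v where v: "(v, x) \<in> T" "(v, x) \<notin> T'"
    by blast
  from spanning_tree_exchange[OF T T' v] obtain b y where
    q: "(b, y) \<in> T'" "(b, y) \<notin> T" and T1: "spanning_tree V E inc (insert (b, y) (T - {(v, x)}))"
    by auto
  define T1 where "T1 = insert (b, y) (T - {(v, x)})"
  show thesis
  proof
    show "y \<in> E"
      using q(1) T' unfolding spanning_tree_def bip_edges_def by blast
    show "spanning_tree V E inc T1"
      using T1 unfolding T1_def .
    have "T1 - T' = (T - T') - {(v, x)}"
      using q(1) unfolding T1_def by blast
    then show "card (T1 - T') < card (T - T')"
      using v finT by (metis DiffI card_Diff1_less finite_Diff)
    show "int (bip_degree T1 e) = int (bip_degree T e) - ind x e + ind y e" for e
      using bip_degree_insert[of "T - {(v, x)}" b y e] bip_degree_remove[OF finT v(1), of e]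
        finT q(2)
      unfolding T1_def by simp
  qed
qed

lemma spanning_tree_degree_exchange:
  assumes fin: "finite V" "finite E"
    and "spanning_tree V E inc T" and T': "spanning_tree V E inc T'"
    and "x \<in> E" and "bip_degree T' x < bip_degree T x"
  shows "\<exists>y \<in> E. bip_degree T y < bip_degree T' y \<and> (\<exists>T2. spanning_tree V E inc T2 \<and>
           (\<forall>e. int (bip_degree T2 e) = int (bip_degree T e) - ind x e + ind y e))"
  using assms(3-)
proof (induction "card (T - T')" arbitrary: T x rule: less_induct)
  case less
  note T = less.prems(1) and x = less.prems(4)
  from spanning_tree_degree_step[OF fin T T' x] obtain y T1 where
    yE: "y \<in> E" and T1: "spanning_tree V E inc T1" and smaller: "card (T1 - T') < card (T - T')"
    and deg1: "\<And>e. int (bip_degree T1 e) = int (bip_degree T e) - ind x e + ind y e"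
    by blast
  show ?case
  proof (cases "bip_degree T y < bip_degree T' y")
    case True
    then show ?thesis
      using yE T1 deg1 by blast
  next
    case False
    then have y: "bip_degree T' y < bip_degree T1 y"
      using deg1[of y] x by (auto simp: ind_def split: if_splits)
    from less.hyps[OF smaller T1 T' yE this] obtain z T2 where
      zE: "z \<in> E" and z: "bip_degree T1 z < bip_degree T' z" and T2: "spanning_tree V E inc T2"
      and deg2: "\<forall>e. int (bip_degree T2 e) = int (bip_degree T1 e) - ind y e + ind z e"
      by blast
    have "bip_degree T z < bip_degree T' z"
      using z deg1[of z] x y by (auto simp: ind_def split: if_splits)
    moreover have "\<forall>e. int (bip_degree T2 e) = int (bip_degree T e) - ind x e + ind z e"
      using deg1 deg2 by simp
    ultimately show ?thesis
      using zE T2 by blast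
  qed
qed

definition exchange_property :: "'e set \<Rightarrow> (('e \<Rightarrow> int) \<Rightarrow> bool) \<Rightarrow> bool" where
  "exchange_property E H \<longleftrightarrow> (\<forall>f g x. H f \<longrightarrow> H g \<longrightarrow> x \<in> E \<longrightarrow> g x < f x \<longrightarrow>
     (\<exists>y \<in> E. f y < g y \<and> H (\<lambda>e. f e - ind x e + ind y e)))"

lemma hypertree_exchange_property:
  assumes "finite V" and "finite E"
  shows "exchange_property E (hypertree V E inc)"
  unfolding exchange_property_def
proof (intro allI impI)
  fix f g x
  assume "hypertree V E inc f" "hypertree V E inc g" and x: "x \<in> E" "g x < f x"
  then obtain T T' where T: "spanning_tree V E inc T" "\<forall>e\<in>E. int (bip_degree T e) = f e + 1"
    and T': "spanning_tree V E inc T'" "\<forall>e\<in>E. int (bip_degree T' e) = g e + 1"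
    unfolding hypertree_def bip_degree_def by blast
  have "bip_degree T' x < bip_degree T x"
    using T(2) T'(2) x by force
  from spanning_tree_degree_exchange[OF assms T(1) T'(1) x(1) this] obtain y T2
    where y: "y \<in> E" "bip_degree T y < bip_degree T' y" and T2: "spanning_tree V E inc T2"
      and deg2: "\<forall>e. int (bip_degree T2 e) = int (bip_degree T e) - ind x e + ind y e"
    by blast
  have "f y < g y"
    using y T(2) T'(2) by force
  moreover have "hypertree V E inc (\<lambda>e. f e - ind x e + ind y e)"
    unfolding hypertree_def bip_degree_def[symmetric]
    using T2 deg2 T(2) by auto
  ultimately show "\<exists>y\<in>E. f y < g y \<and> hypertree V E inc (\<lambda>e. f e - ind x e + ind y e)"
    using y(1) by blast
qed

definition transfer_sum :: "('i \<Rightarrow> 'e) \<Rightarrow> ('i \<Rightarrow> 'e) \<Rightarrow> 'i set \<Rightarrow> 'e \<Rightarrow> int" where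
  "transfer_sum a x J e = (\<Sum>j\<in>J. ind (a j) e - ind (x j) e)"

lemma transfer_sum_remove:
  "finite J \<Longrightarrow> k \<in> J \<Longrightarrow>
     transfer_sum a x J e = transfer_sum a x (J - {k}) e + ind (a k) e - ind (x k) e"
  unfolding transfer_sum_def by (simp add: sum.remove)

lemma transfer_sum_at_source:
  assumes "inj_on x I" and "a ` I \<inter> x ` I = {}" and "finite J" "J \<subseteq> I" and "k \<in> I"
  shows "transfer_sum a x J (x k) = (if k \<in> J then -1 else 0)"
proof -
  have "ind (a j) (x k) - ind (x j) (x k) = (if j = k then -1 else 0)" if "j \<in> J" for j
  proof -
    have "j \<in> I"
      using that assms(4) by blast
    then have "a j \<noteq> x k" and "x j = x k \<longleftrightarrow> j = k"
      using assms(2,5) inj_on_eq_iff[OF assms(1) _ assms(5)] by blast+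
    then show ?thesis
      unfolding ind_def by auto
  qed
  then show ?thesis
    unfolding transfer_sum_def using assms(3) by (simp add: sum.delta')
qed

lemma transfer_sum_pos_imp_target:
  assumes "0 < transfer_sum a x J e"
  shows "e \<in> a ` J"
proof (rule ccontr)
  assume "e \<notin> a ` J"
  then have "transfer_sum a x J e \<le> 0"
    unfolding transfer_sum_def by (intro sum_nonpos) (auto simp: ind_def)
  then show False
    using assms by simp
qed

locale ordered_transfers =
  fixes E :: "'e set" and H :: "('e \<Rightarrow> int) \<Rightarrow> bool" and f :: "'e \<Rightarrow> int"
    and a x :: "'i :: linorder \<Rightarrow> 'e" and I :: "'i set"
  assumes exchange: "exchange_property E H"
    and base: "H f"
    and sources: "x ` I \<subseteq> E"
    and disjoint: "a ` I \<inter> x ` I = {}"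
    and transfer: "\<And>j. j \<in> I \<Longrightarrow> H (\<lambda>e. f e - ind (x j) e + ind (a j) e)"
    and no_transfer:
      "\<And>i j. i \<in> I \<Longrightarrow> j \<in> I \<Longrightarrow> i < j \<Longrightarrow> \<not> H (\<lambda>e. f e - ind (x j) e + ind (a i) e)"
begin

lemma inj_sources: "inj_on x I"
proof (rule inj_onI, rule ccontr)
  fix i j
  assume "i \<in> I" "j \<in> I" "x i = x j" "i \<noteq> j"
  then show False
    using transfer no_transfer by (metis linorder_neqE)
qed

definition shifted :: "'i set \<Rightarrow> 'e \<Rightarrow> int" where
  "shifted J = (\<lambda>e. f e + transfer_sum a x J e)"

lemma shifted_at_source:
  "finite J \<Longrightarrow> J \<subseteq> I \<Longrightarrow> k \<in> I \<Longrightarrow> shifted J (x k) = f (x k) - (if k \<in> J then 1 else 0)"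
  unfolding shifted_def using transfer_sum_at_source[OF inj_sources disjoint] by simp

lemma no_transfer_back:
  assumes J: "finite J" "J \<subseteq> I" and k1: "k1 \<in> J" and k2: "k2 \<in> I" "\<forall>j\<in>J. j < k2"
  shows "\<not> H (\<lambda>e. shifted J e - ind (x k2) e + ind (x k1) e)"
proof
  define g where "g = (\<lambda>e. shifted J e - ind (x k2) e + ind (x k1) e)"
  assume "H (\<lambda>e. shifted J e - ind (x k2) e + ind (x k1) e)"
  then have Hg: "H g"
    unfolding g_def .
  have "x k1 \<noteq> x k2"
    using k1 k2 J inj_sources unfolding inj_on_def by blast
  then have "g (x k2) < f (x k2)"
    using shifted_at_source[OF J k2(1)] k2(2) unfolding g_def ind_def by auto
  with exchange base Hg sources k2(1) obtain y where
    "f y < g y" and Hy: "H (\<lambda>e. f e - ind (x k2) e + ind y e)"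
    unfolding exchange_property_def by blast
  then have "0 < transfer_sum a x (J - {k1}) y + ind (a k1) y - ind (x k2) y"
    using transfer_sum_remove[OF J(1) k1, of a x y] unfolding g_def shifted_def by simp
  then have "y \<in> a ` J"
    using transfer_sum_pos_imp_target[of a x "J - {k1}" y] k1
    by (cases "y = a k1") (auto simp: ind_def split: if_splits)
  then obtain i where "i \<in> J" "y = a i"
    by blast
  then show False
    using Hy no_transfer[of i k2] J k2 by blast
qed

lemma shifted_step:
  assumes J: "finite J" "J \<subseteq> I" and k1: "k1 \<in> J" "k1 \<noteq> k2"
    and k2: "k2 \<in> J" "\<forall>j\<in>J. j \<le> k2"
    and H1: "H (shifted (J - {k1}))" and H2: "H (shifted (J - {k2}))"
  shows "H (shifted J)"
proof -
  have "k2 \<in> I" and sub: "J - {k} \<subseteq> I" for k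
    using J k2 by blast+
  then have "shifted (J - {k1}) (x k2) < shifted (J - {k2}) (x k2)"
    using shifted_at_source[OF _ sub] J k1 k2 by simp
  with exchange H1 H2 sources \<open>k2 \<in> I\<close> obtain y where
    y: "shifted (J - {k2}) y < shifted (J - {k1}) y"
    and Hy: "H (\<lambda>e. shifted (J - {k2}) e - ind (x k2) e + ind y e)"
    unfolding exchange_property_def by blast
  have remove: "shifted J e = shifted (J - {k}) e + ind (a k) e - ind (x k) e" if "k \<in> J" for k e
    using transfer_sum_remove[OF J(1) that] unfolding shifted_def by (simp add: algebra_simps)
  from y have "y = a k2 \<or> y = x k1"
    using remove[OF k1(1), of y] remove[OF k2(1), of y] by (auto simp: ind_def split: if_splits)
  moreover have "y \<noteq> x k1"
  proof
    assume "y = x k1"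
    moreover have "\<forall>j \<in> J - {k2}. j < k2"
      using k2(2) by force
    ultimately show False
      using no_transfer_back[of "J - {k2}" k1 k2] Hy J k1 \<open>k2 \<in> I\<close> by auto
  qed
  moreover have "(\<lambda>e. shifted (J - {k2}) e - ind (x k2) e + ind (a k2) e) = shifted J"
    using remove[OF k2(1)] by (simp add: fun_eq_iff)
  ultimately show ?thesis
    using Hy by auto
qed

lemma H_shifted: "finite J \<Longrightarrow> J \<subseteq> I \<Longrightarrow> H (shifted J)"
proof (induction J rule: finite_psubset_induct)
  case (psubset J)
  consider "J = {}" | k where "J = {k}" | k1 where "k1 \<in> J" "k1 \<noteq> Max J"
    by (metis is_singletonI' is_singleton_the_elem)
  then show ?case
  proof cases
    case 1
    then show ?thesis
      using base unfolding shifted_def transfer_sum_def by simp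
  next
    case (2 k)
    then show ?thesis
      using transfer[of k] psubset.prems unfolding shifted_def transfer_sum_def
      by (simp add: algebra_simps)
  next
    case (3 k1)
    then have "Max J \<in> J" "\<forall>j\<in>J. j \<le> Max J"
      using psubset.hyps by (auto intro: Max_in)
    moreover have "H (shifted (J - {k}))" if "k \<in> J" for k
      using psubset that by blast
    ultimately show ?thesis
      using shifted_step psubset.hyps psubset.prems 3 by blast
  qed
qed

end

theorem lemma4p5:
  fixes V :: "'v set" and E :: "'e set" and inc :: "'e \<Rightarrow> 'v set"
    and a x :: "nat \<Rightarrow> 'e" and m :: nat and f :: "'e \<Rightarrow> int"
  assumes "hypergraph V E inc"
    and "hyp_connected V E inc"
    and "a ` {1..m} \<subseteq> E" and "x ` {1..m} \<subseteq> E"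
    and "a ` {1..m} \<inter> x ` {1..m} = {}"
    and "hypertree V E inc f"
    and "\<forall>j\<in>{1..m}. can_transfer V E inc f (x j) (a j)"
    and "\<forall>j\<in>{1..m}. \<forall>i\<in>{1..m}. i < j \<longrightarrow> \<not> can_transfer V E inc f (x j) (a i)"
  shows "\<forall>J \<subseteq> {1..m}. hypertree V E inc
           (\<lambda>e. f e + (\<Sum>j\<in>J. ind (a j) e - ind (x j) e))"
proof -
  have "finite V" "finite E"
    using assms(1) unfolding hypergraph_def by auto
  then interpret ordered_transfers E "hypertree V E inc" f a x "{1..m}"
    using assms(4-8) hypertree_exchange_property unfolding can_transfer_def
    by unfold_locales auto
  show ?thesis
    using H_shifted unfolding shifted_def transfer_sum_def by (auto intro: finite_subset)
qed

end
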